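(* Let $(X,d,\mu)$ be geometrically doubling and upper doubling with fixed dominating function $\lambda$. For $\varrho>1$ denote by $\mathrm{RBMO}_\varrho(\mu)$ the space $\mathrm{RBMO}(\mu)$ defined with parameter $\varrho$. Then $\mathrm{RBMO}_\varrho(\mu)$ does not depend on $\varrho$: for all $\varrho,\sigma>1$, $\mathrm{RBMO}_\varrho(\mu)=\mathrm{RBMO}_\sigma(\mu)$.
   Context: Balls $B=B(x,r)=\{y:d(y,x)<r\}$ have specified centre $c_B=x$ and radius $r_B=r>0$; $tB:=B(x,tr)$. Geometrically doubling: there is $N$ such that every ball $B(x,r)$ is covered by at most $N$ balls of radius $r/2$. Upper doubling: $\mu$ is a Borel measure, finite on bounded sets, and there are $\lambda:X\times(0,\infty)\to(0,\infty)$ and $C_\lambda$ with $r\mapsto\lambda(x,r)$ non-decreasing, $\lambda(x,2r)\le C_\lambda\lambda(x,r)$, $\mu(B(x,r))\le\lambda(x,r)$. A function $f\in L^1_{\mathrm{loc}}(\mu)$ (integrable on bounded sets) belongs to $\mathrm{RBMO}_\varrho(\mu)$ if there exist a number $A$ and, for every ball $B$, a number $f_B$ such that $\frac{1}{\mu(\varrho B)}\int_B|f-f_B|\,d\mu\le A$ for every ball $B$, and whenever $B\subset B_1$ are balls, $|f_B-f_{B_1}|\le A\{1+\int_{2B_1\setminus B}\frac{d\mu(x)}{\lambda(c_B,d(x,c_B))}\}$. The infimum of admissible $A$ is the norm $\|f\|_{\mathrm{RBMO}_\varrho}$. *)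

theory Defs
  imports "HOL-Analysis.Analysis"
begin

definition geom_doubling :: "'a::metric_space itself \<Rightarrow> bool" where
  "geom_doubling _ \<longleftrightarrow> (\<exists>N::nat. \<forall>(x::'a) r. r > 0 \<longrightarrow>
     (\<exists>C. finite C \<and> card C \<le> N \<and> ball x r \<subseteq> (\<Union>c\<in>C. ball c (r/2))))"

definition upper_doubling :: "'a::metric_space measure \<Rightarrow> ('a \<Rightarrow> real \<Rightarrow> real) \<Rightarrow> bool" where
  "upper_doubling mu lam \<longleftrightarrow>
     sets mu = sets borel \<and>
     (\<forall>B. bounded B \<and> B \<in> sets borel \<longrightarrow> emeasure mu B < \<infinity>) \<and>
     (\<forall>x r. r > 0 \<longrightarrow> lam x r > 0) \<and>
     (\<forall>x. mono_on {0<..} (lam x)) \<and>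
     (\<exists>C. \<forall>x r. r > 0 \<longrightarrow> lam x (2*r) \<le> C * lam x r) \<and>
     (\<forall>x r. r > 0 \<longrightarrow> measure mu (ball x r) \<le> lam x r)"

definition loc_integrable :: "'a::metric_space measure \<Rightarrow> ('a \<Rightarrow> real) \<Rightarrow> bool" where
  "loc_integrable mu f \<longleftrightarrow> (\<forall>B. bounded B \<and> B \<in> sets borel \<longrightarrow> set_integrable mu B f)"

text \<open>The condition (1/mu(rho B)) int_B |f - f_B| <= A is written multiplied out
  (if mu(rho B)=0 then also mu(B)=0 and both sides vanish).\<close>
definition RBMO_admissible ::
  "'a::metric_space measure \<Rightarrow> ('a \<Rightarrow> real \<Rightarrow> real) \<Rightarrow> real \<Rightarrow> ('a \<Rightarrow> real)
     \<Rightarrow> real \<Rightarrow> ('a \<Rightarrow> real \<Rightarrow> real) \<Rightarrow> bool" where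
  "RBMO_admissible mu lam rho f A fB \<longleftrightarrow>
     (\<forall>x r. r > 0 \<longrightarrow>
        (\<integral>y\<in>ball x r. \<bar>f y - fB x r\<bar> \<partial>mu) \<le> A * measure mu (ball x (rho * r))) \<and>
     (\<forall>x r x1 r1. r > 0 \<longrightarrow> r1 > 0 \<longrightarrow> ball x r \<subseteq> ball x1 r1 \<longrightarrow>
        \<bar>fB x r - fB x1 r1\<bar> \<le>
          A * (1 + (\<integral>y\<in>ball x1 (2*r1) - ball x r. 1 / lam x (dist y x) \<partial>mu)))"

definition RBMO :: "'a::metric_space measure \<Rightarrow> ('a \<Rightarrow> real \<Rightarrow> real) \<Rightarrow> real \<Rightarrow> ('a \<Rightarrow> real) set" where
  "RBMO mu lam rho = {f. loc_integrable mu f \<and> (\<exists>A fB. RBMO_admissible mu lam rho f A fB)}"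

end

theory Submission
  imports Defs
begin

text \<open>It suffices to bound the mean oscillation over \<open>B = B(x,r)\<close> by the larger dilate \<open>\<rho>B\<close>
  when the norm is controlled with respect to \<open>\<sigma>\<close>; the coherence condition does not involve the
  parameter at all. By geometric doubling, \<open>B\<close> is covered by a bounded number of balls \<open>B\<^sub>c\<close> of radius
  \<open>r/2\<^sup>k\<close>, with \<open>k\<close> so large that \<open>\<sigma>B\<^sub>c \<subseteq> \<rho>B\<close>. On each \<open>B\<^sub>c\<close> one compares \<open>f\<^sub>B\<^sub>c\<close> with \<open>f\<^sub>B\<close>
  through \<open>f\<^sub>\<rho>\<^sub>B\<close>, and the integrals of \<open>1/\<lambda>\<close> occurring in the coherence condition are bounded
  by decomposing the annuli involved into boundedly many dyadic shells, each of which contributes at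
  most the doubling constant of \<open>\<lambda>\<close>.\<close>

lemma ball_subset_ball_dist:
  assumes "dist x c + s \<le> R"
  shows "ball c s \<subseteq> ball x R"
proof
  fix z assume "z \<in> ball c s"
  then show "z \<in> ball x R" using dist_triangle[of x z c] assms by simp
qed

lemma ball_cover_restrict_near:
  assumes "ball x r \<subseteq> (\<Union>c\<in>C. ball c t)"
  shows "ball x r \<subseteq> (\<Union>c\<in>{c \<in> C. dist x c < r + t}. ball c t)"
proof
  fix z assume "z \<in> ball x r"
  then obtain c where "c \<in> C" "z \<in> ball c t" using assms by blast
  moreover have "dist x c < r + t"
    using \<open>z \<in> ball x r\<close> \<open>z \<in> ball c t\<close> dist_triangle[of x c z] by (simp add: dist_commute)
  ultimately show "z \<in> (\<Union>c\<in>{c \<in> C. dist x c < r + t}. ball c t)" by blast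
qed

lemma exists_dyadic_shell:
  fixes d s :: real
  assumes "s > 0" "s \<le> d" "d < 2^m * s"
  obtains j where "j < m" "2^j * s \<le> d" "d < 2^Suc j * s"
proof -
  obtain j where j: "\<not> d < 2^j * s" "d < 2^Suc j * s"
    using exists_least_lemma[of "\<lambda>j. d < 2^j * s"] assms by auto
  have "j < m"
  proof (rule ccontr)
    assume "\<not> j < m"
    then have "2^m * s \<le> 2^j * s" using assms(1) by (simp add: power_increasing)
    then show False using j(1) assms(3) by simp
  qed
  then show thesis using that j by simp
qed

lemma set_integral_le_sum_cover:
  fixes h :: "'a \<Rightarrow> real"
  assumes "finite I" "S \<subseteq> (\<Union>i\<in>I. T i)" "\<And>z. 0 \<le> h z"
    and "set_integrable mu S h" "\<And>i. i \<in> I \<Longrightarrow> set_integrable mu (T i) h"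
  shows "(\<integral>z\<in>S. h z \<partial>mu) \<le> (\<Sum>i\<in>I. (\<integral>z\<in>T i. h z \<partial>mu))"
proof -
  have "indicator S z * h z \<le> (\<Sum>i\<in>I. indicator (T i) z * h z)" for z
  proof (cases "z \<in> S")
    case True
    then obtain i where "i \<in> I" "z \<in> T i" using assms(2) by blast
    then show ?thesis
      using True assms(1,3) member_le_sum[of i I "\<lambda>i. indicator (T i) z * h z"] by simp
  qed (simp add: assms(3) sum_nonneg)
  then have "(\<integral>z. indicator S z * h z \<partial>mu) \<le> (\<integral>z. (\<Sum>i\<in>I. indicator (T i) z * h z) \<partial>mu)"
    using assms(4,5) by (intro integral_mono) (auto simp: set_integrable_def)
  also have "\<dots> = (\<Sum>i\<in>I. (\<integral>z. indicator (T i) z * h z \<partial>mu))"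
    using assms(5) by (intro Bochner_Integration.integral_sum) (auto simp: set_integrable_def)
  finally show ?thesis by (simp add: set_lebesgue_integral_def)
qed

lemma set_integral_abs_diff_const_le:
  fixes f :: "'a \<Rightarrow> real"
  assumes B: "B \<in> fmeasurable M" and f: "set_integrable M B f"
  shows "(\<integral>z\<in>B. \<bar>f z - a\<bar> \<partial>M) \<le> (\<integral>z\<in>B. \<bar>f z - b\<bar> \<partial>M) + measure M B * \<bar>b - a\<bar>"
proof -
  have const: "set_integrable M B (\<lambda>_. c)" for c :: real
    using B unfolding set_integrable_def fmeasurable_def by simp
  have fb: "set_integrable M B (\<lambda>z. \<bar>f z - b\<bar>)"
    by (intro set_integrable_abs set_integral_diff(1) f const)
  have "(\<integral>z\<in>B. \<bar>f z - a\<bar> \<partial>M) \<le> (\<integral>z\<in>B. \<bar>f z - b\<bar> + \<bar>b - a\<bar> \<partial>M)"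
    by (intro set_integral_mono set_integrable_abs set_integral_diff(1) set_integral_add(1)
        f fb const) auto
  also have "\<dots> = (\<integral>z\<in>B. \<bar>f z - b\<bar> \<partial>M) + measure M B * \<bar>b - a\<bar>"
    using set_integral_add(2)[OF fb const] fmeasurableD2[OF B]
      set_integral_const[where c = "\<bar>b - a\<bar>", OF fmeasurableD[OF B]]
    by simp
  finally show ?thesis .
qed

lemma upper_doubling_sets: "upper_doubling mu lam \<Longrightarrow> sets mu = sets borel"
  by (simp add: upper_doubling_def)

lemma upper_doubling_space: "upper_doubling mu lam \<Longrightarrow> space mu = UNIV"
  using sets_eq_imp_space_eq[OF upper_doubling_sets] by simp

lemma upper_doubling_lam_pos: "upper_doubling mu lam \<Longrightarrow> r > 0 \<Longrightarrow> lam x r > 0"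
  by (simp add: upper_doubling_def)

lemma upper_doubling_lam_mono:
  "upper_doubling mu lam \<Longrightarrow> 0 < a \<Longrightarrow> a \<le> b \<Longrightarrow> lam x a \<le> lam x b"
  unfolding upper_doubling_def by (meson mono_onD greaterThan_iff less_le_trans)

lemma upper_doubling_measure_ball_le:
  "upper_doubling mu lam \<Longrightarrow> r > 0 \<Longrightarrow> measure mu (ball x r) \<le> lam x r"
  by (simp add: upper_doubling_def)

lemma upper_doubling_bounded_fmeasurable:
  "upper_doubling mu lam \<Longrightarrow> bounded B \<Longrightarrow> B \<in> sets borel \<Longrightarrow> B \<in> fmeasurable mu"
  by (simp add: upper_doubling_def fmeasurable_def)

lemma upper_doubling_ball_fmeasurable: "upper_doubling mu lam \<Longrightarrow> ball x r \<in> fmeasurable mu"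
  by (rule upper_doubling_bounded_fmeasurable) auto

lemma upper_doubling_measure_mono_ball:
  assumes "upper_doubling mu lam" "ball y q \<subseteq> ball x r"
  shows "measure mu (ball y q) \<le> measure mu (ball x r)"
  by (rule measure_mono_fmeasurable[OF assms(2) fmeasurableD upper_doubling_ball_fmeasurable])
    (rule upper_doubling_ball_fmeasurable assms(1))+

lemma upper_doubling_doubling_constant_pos:
  assumes "upper_doubling mu lam" and "\<And>x r. r > 0 \<Longrightarrow> lam x (2*r) \<le> C * lam x r"
  shows "C > 0"
proof -
  fix x
  have "0 < lam x 2" "0 < lam x 1" using upper_doubling_lam_pos[OF assms(1)] by auto
  moreover have "lam x 2 \<le> C * lam x 1" using assms(2)[of 1 x] by simp
  ultimately show ?thesis by (smt (verit) mult_nonpos_nonneg)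
qed

lemma loc_integrable_abs_diff_const:
  assumes ud: "upper_doubling mu lam" and "loc_integrable mu f" and "bounded B" "B \<in> sets borel"
  shows "set_integrable mu B (\<lambda>z. \<bar>f z - a\<bar>)"
proof -
  have "set_integrable mu B f" using assms unfolding loc_integrable_def by blast
  moreover have "set_integrable mu B (\<lambda>_. a)"
    using upper_doubling_bounded_fmeasurable[OF assms(1,3,4)]
    unfolding set_integrable_def fmeasurable_def by simp
  ultimately show ?thesis by (intro set_integrable_abs set_integral_diff(1))
qed

lemma set_integral_inverse_lam_nonneg:
  assumes "upper_doubling mu lam" "r > 0"
  shows "0 \<le> (\<integral>y\<in>U - ball x r. 1 / lam x (dist y x) \<partial>mu)"
  unfolding set_lebesgue_integral_def
proof (rule Bochner_Integration.integral_nonneg)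
  fix y
  have "0 \<le> 1 / lam x (dist y x)" if "y \<notin> ball x r"
  proof -
    have "dist y x > 0" using that assms(2) by (auto simp: dist_commute)
    then show ?thesis using upper_doubling_lam_pos[OF assms(1)] by (simp add: less_imp_le)
  qed
  then show "0 \<le> indicator (U - ball x r) y *\<^sub>R (1 / lam x (dist y x))"
    by (simp add: indicator_def)
qed

definition dyadic_shell :: "'a::metric_space \<Rightarrow> real \<Rightarrow> nat \<Rightarrow> 'a set" where
  "dyadic_shell y s j = ball y (2^Suc j * s) - ball y (2^j * s)"

lemma upper_doubling_dyadic_shell_fmeasurable:
  "upper_doubling mu lam \<Longrightarrow> dyadic_shell y s j \<in> fmeasurable mu"
  unfolding dyadic_shell_def
  by (rule upper_doubling_bounded_fmeasurable) (auto intro: bounded_subset[OF bounded_ball])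

lemma upper_doubling_measure_dyadic_shell_le:
  assumes ud: "upper_doubling mu lam" and C: "\<And>x r. r > 0 \<Longrightarrow> lam x (2*r) \<le> C * lam x r"
    and "s > 0"
  shows "measure mu (dyadic_shell y s j) \<le> C * lam y (2^j * s)"
proof -
  have "measure mu (dyadic_shell y s j) \<le> measure mu (ball y (2 * (2^j * s)))"
    using fmeasurableD[OF upper_doubling_dyadic_shell_fmeasurable[OF ud]]
    by (intro measure_mono_fmeasurable upper_doubling_ball_fmeasurable[OF ud])
      (auto simp: dyadic_shell_def)
  also have "\<dots> \<le> lam y (2 * (2^j * s))" using upper_doubling_measure_ball_le[OF ud] \<open>s > 0\<close> by simp
  also have "\<dots> \<le> C * lam y (2^j * s)" using C \<open>s > 0\<close> by simp
  finally show ?thesis .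
qed

lemma inverse_lam_le_sum_dyadic_shell:
  assumes ud: "upper_doubling mu lam" and "s > 0" "s \<le> dist z y" "dist z y < 2^m * s"
  shows "1 / lam y (dist z y) \<le> (\<Sum>j<m. indicator (dyadic_shell y s j) z / lam y (2^j * s))"
proof -
  obtain j where j: "j < m" "2^j * s \<le> dist z y" "dist z y < 2^Suc j * s"
    using exists_dyadic_shell assms(2-4) by metis
  have lam_pos: "lam y (2^i * s) > 0" for i
    using upper_doubling_lam_pos[OF ud] \<open>s > 0\<close> by simp
  have "lam y (2^j * s) \<le> lam y (dist z y)"
    using upper_doubling_lam_mono[OF ud] j(2) \<open>s > 0\<close> by simp
  then have "1 / lam y (dist z y) \<le> indicator (dyadic_shell y s j) z / lam y (2^j * s)"
    using j lam_pos[of j] by (simp add: dyadic_shell_def dist_commute divide_left_mono)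
  also have "\<dots> \<le> (\<Sum>j<m. indicator (dyadic_shell y s j) z / lam y (2^j * s))"
    using j lam_pos by (intro member_le_sum divide_nonneg_pos) auto
  finally show ?thesis .
qed

lemma set_integral_inverse_lam_annulus_le:
  fixes mu :: "'a::metric_space measure"
  assumes ud: "upper_doubling mu lam" and C: "\<And>x r. r > 0 \<Longrightarrow> lam x (2*r) \<le> C * lam x r"
    and s: "s > 0" and S: "S \<in> sets borel" "S \<subseteq> ball y (2^m * s) - ball y s"
  shows "(\<integral>z\<in>S. 1 / lam y (dist z y) \<partial>mu) \<le> real m * C"
proof -
  define F where "F z = indicator S z *\<^sub>R (1 / lam y (dist z y))" for z
  define G where "G z = (\<Sum>j<m. indicator (dyadic_shell y s j) z / lam y (2^j * s))" for z
  have shell_integrable: "integrable mu (indicator (dyadic_shell y s j) :: 'a \<Rightarrow> real)" for j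
    using upper_doubling_dyadic_shell_fmeasurable[OF ud] by (auto simp: fmeasurable_def)
  have "C > 0" using upper_doubling_doubling_constant_pos[OF ud] C by blast
  have "integral\<^sup>L mu F \<le> real m * C"
  proof (cases "integrable mu F")
    case False
    then show ?thesis using \<open>C > 0\<close> by (simp add: not_integrable_integral_eq)
  next
    case True
    have "F z \<le> G z" for z
    proof (cases "z \<in> S")
      case False
      then show ?thesis using upper_doubling_lam_pos[OF ud] s
        by (auto simp: F_def G_def intro!: sum_nonneg divide_nonneg_pos)
    next
      case True
      then have "s \<le> dist z y" "dist z y < 2^m * s" using S(2) by (auto simp: dist_commute)
      then show ?thesis using True inverse_lam_le_sum_dyadic_shell[OF ud s] by (simp add: F_def G_def)
    qed
    moreover have "integrable mu G" unfolding G_def using shell_integrable by auto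
    ultimately have "integral\<^sup>L mu F \<le> integral\<^sup>L mu G" using True by (intro integral_mono)
    also have "\<dots> = (\<Sum>j<m. measure mu (dyadic_shell y s j) / lam y (2^j * s))"
      unfolding G_def using shell_integrable
      by (subst Bochner_Integration.integral_sum) (auto simp: upper_doubling_space[OF ud])
    also have "\<dots> \<le> (\<Sum>j<m. C)"
      using upper_doubling_measure_dyadic_shell_le[OF ud, OF C s] upper_doubling_lam_pos[OF ud] s
      by (intro sum_mono) (simp add: divide_le_eq)
    finally show ?thesis by simp
  qed
  then show ?thesis unfolding set_lebesgue_integral_def F_def by simp
qed

lemma geom_doubling_iterate:
  assumes "geom_doubling TYPE('a::metric_space)"
  obtains N :: nat where "\<And>k (x::'a) r. r > 0 \<Longrightarrow>
    \<exists>C. finite C \<and> card C \<le> N^k \<and> ball x r \<subseteq> (\<Union>c\<in>C. ball c (r/2^k))"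
proof -
  obtain N :: nat where N: "\<And>(x::'a) r. r > 0 \<Longrightarrow>
      \<exists>C. finite C \<and> card C \<le> N \<and> ball x r \<subseteq> (\<Union>c\<in>C. ball c (r/2))"
    using assms unfolding geom_doubling_def by blast
  have "\<exists>C. finite C \<and> card C \<le> N^k \<and> ball x r \<subseteq> (\<Union>c\<in>C. ball c (r/2^k))"
    if "r > 0" for k and x :: 'a and r
    using that
  proof (induction k arbitrary: x r)
    case 0
    show ?case by (intro exI[of _ "{x}"]) auto
  next
    case (Suc k)
    obtain C where C: "finite C" "card C \<le> N^k" "ball x r \<subseteq> (\<Union>c\<in>C. ball c (r/2^k))"
      using Suc by blast
    have "\<exists>D. finite D \<and> card D \<le> N \<and> ball c (r/2^k) \<subseteq> (\<Union>d\<in>D. ball d (r/2^k/2))" for c :: 'a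
      using N[of "r/2^k" c] Suc.prems by simp
    then obtain D :: "'a \<Rightarrow> 'a set" where D: "\<And>c. finite (D c)" "\<And>c. card (D c) \<le> N"
      "\<And>c. ball c (r/2^k) \<subseteq> (\<Union>d\<in>D c. ball d (r/2^k/2))"
      by metis
    have "card (\<Union>c\<in>C. D c) \<le> (\<Sum>c\<in>C. card (D c))" by (rule card_UN_le[OF C(1)])
    also have "\<dots> \<le> card C * N" using sum_bounded_above[of C "\<lambda>c. card (D c)" N] D(2) by simp
    also have "\<dots> \<le> N^Suc k" using C(2) by (simp add: mult.commute)
    finally have "card (\<Union>c\<in>C. D c) \<le> N^Suc k" .
    moreover have "ball x r \<subseteq> (\<Union>d\<in>(\<Union>c\<in>C. D c). ball d (r/2^Suc k))"
      using C(3) D(3) by (fastforce simp: mult.commute)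
    ultimately show ?case using C(1) D(1) by blast
  qed
  then show thesis using that by blast
qed

lemma RBMO_admissible_oscillationD:
  "RBMO_admissible mu lam rho f A fB \<Longrightarrow> r > 0 \<Longrightarrow>
    (\<integral>y\<in>ball x r. \<bar>f y - fB x r\<bar> \<partial>mu) \<le> A * measure mu (ball x (rho * r))"
  by (simp add: RBMO_admissible_def)

lemma RBMO_admissible_coherenceD:
  "RBMO_admissible mu lam rho f A fB \<Longrightarrow> r > 0 \<Longrightarrow> r1 > 0 \<Longrightarrow> ball x r \<subseteq> ball x1 r1 \<Longrightarrow>
    \<bar>fB x r - fB x1 r1\<bar> \<le> A * (1 + (\<integral>y\<in>ball x1 (2*r1) - ball x r. 1 / lam x (dist y x) \<partial>mu))"
  by (simp add: RBMO_admissible_def)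

lemma RBMO_admissible_const_nonneg:
  assumes "upper_doubling mu lam" "RBMO_admissible mu lam rho f A fB"
  shows "A \<ge> 0"
proof -
  fix x
  define I where "I = (\<integral>y\<in>ball x (2*1) - ball x 1. 1 / lam x (dist y x) \<partial>mu)"
  have "\<bar>fB x 1 - fB x 1\<bar> \<le> A * (1 + I)"
    unfolding I_def by (rule RBMO_admissible_coherenceD[OF assms(2)]) auto
  moreover have "0 \<le> I" unfolding I_def by (rule set_integral_inverse_lam_nonneg[OF assms(1)]) simp
  ultimately show ?thesis by (simp add: zero_le_mult_iff)
qed

lemma RBMO_admissible_const_mono:
  fixes mu :: "'a::metric_space measure"
  assumes "upper_doubling mu lam" "RBMO_admissible mu lam rho f A fB" "A \<le> A'"
  shows "RBMO_admissible mu lam rho f A' fB"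
  unfolding RBMO_admissible_def
proof (intro conjI allI impI)
  fix x :: 'a and r :: real assume "r > 0"
  have "(\<integral>y\<in>ball x r. \<bar>f y - fB x r\<bar> \<partial>mu) \<le> A * measure mu (ball x (rho * r))"
    by (rule RBMO_admissible_oscillationD[OF assms(2) \<open>r > 0\<close>])
  also have "\<dots> \<le> A' * measure mu (ball x (rho * r))"
    using assms(3) by (simp add: mult_right_mono)
  finally show "(\<integral>y\<in>ball x r. \<bar>f y - fB x r\<bar> \<partial>mu) \<le> A' * measure mu (ball x (rho * r))" .
next
  fix x x1 :: 'a and r r1 :: real assume "r > 0" "r1 > 0" "ball x r \<subseteq> ball x1 r1"
  define I where "I = (\<integral>y\<in>ball x1 (2*r1) - ball x r. 1 / lam x (dist y x) \<partial>mu)"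
  have "\<bar>fB x r - fB x1 r1\<bar> \<le> A * (1 + I)"
    unfolding I_def by (rule RBMO_admissible_coherenceD[OF assms(2)]) fact+
  also have "\<dots> \<le> A' * (1 + I)"
    using assms(3) set_integral_inverse_lam_nonneg[OF assms(1) \<open>r > 0\<close>]
    by (intro mult_right_mono) (auto simp: I_def)
  finally show "\<bar>fB x r - fB x1 r1\<bar> \<le> A' * (1 + I)" .
qed

text \<open>\<open>f\<^sub>B\<^sub>c\<close> is compared with \<open>f\<^sub>B\<close> through the ball \<open>B(x,R)\<close> containing both \<open>B\<^sub>c = B(c,t)\<close> and
  \<open>B = B(x,r)\<close>; the hypotheses on \<open>m\<^sub>1\<close> and \<open>m\<^sub>2\<close> cover the two annuli of the coherence
  condition by that many dyadic shells.\<close>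
lemma RBMO_admissible_small_ball_oscillation_le:
  fixes mu :: "'a::metric_space measure"
  assumes ud: "upper_doubling mu lam" and Cl: "\<And>x r. r > 0 \<Longrightarrow> lam x (2*r) \<le> Cl * lam x r"
    and li: "loc_integrable mu f" and adm: "RBMO_admissible mu lam sg f A fB" and "sg \<ge> 1"
    and r: "0 < r" "r \<le> R" and t: "0 < t"
    and small: "ball c (sg * t) \<subseteq> ball x R"
    and far: "ball x (2*R) \<subseteq> ball c (2^m1 * t)"
    and "2*R \<le> 2^m2 * r"
  shows "(\<integral>z\<in>ball c t. \<bar>f z - fB x r\<bar> \<partial>mu)
    \<le> A * (3 + real m1 * Cl + real m2 * Cl) * measure mu (ball x R)"
proof -
  have "A \<ge> 0" by (rule RBMO_admissible_const_nonneg[OF ud adm])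
  have "R > 0" using r by simp
  have "ball c t \<subseteq> ball c (sg * t)" using \<open>sg \<ge> 1\<close> t by (intro subset_ball) simp
  then have ct_sub: "ball c t \<subseteq> ball x R" using small by blast
  have xr_sub: "ball x r \<subseteq> ball x R" using r by (intro subset_ball)
  define mR where "mR = measure mu (ball x R)"
  have borel: "ball x (2*R) - ball y q \<in> sets borel" for y and q :: real
    by (intro sets.Diff borel_open) auto
  have "(\<integral>z\<in>ball c t. \<bar>f z - fB c t\<bar> \<partial>mu) \<le> A * measure mu (ball c (sg * t))"
    by (rule RBMO_admissible_oscillationD[OF adm t])
  also have "\<dots> \<le> A * mR"
    unfolding mR_def using upper_doubling_measure_mono_ball[OF ud small] \<open>A \<ge> 0\<close>
    by (rule mult_left_mono)
  finally have osc: "(\<integral>z\<in>ball c t. \<bar>f z - fB c t\<bar> \<partial>mu) \<le> A * mR" .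
  have "(\<integral>z\<in>ball x (2*R) - ball c t. 1 / lam c (dist z c) \<partial>mu) \<le> real m1 * Cl"
    using far by (intro set_integral_inverse_lam_annulus_le[OF ud, OF Cl t borel] Diff_mono) auto
  then have "\<bar>fB c t - fB x R\<bar> \<le> A * (1 + real m1 * Cl)"
    using RBMO_admissible_coherenceD[OF adm t \<open>R > 0\<close> ct_sub] \<open>A \<ge> 0\<close>
    by (meson add_left_mono mult_left_mono order_trans)
  moreover have "(\<integral>z\<in>ball x (2*R) - ball x r. 1 / lam x (dist z x) \<partial>mu) \<le> real m2 * Cl"
    using \<open>2*R \<le> 2^m2 * r\<close>
    by (intro set_integral_inverse_lam_annulus_le[OF ud, OF Cl r(1) borel] Diff_mono subset_ball) auto
  then have "\<bar>fB x r - fB x R\<bar> \<le> A * (1 + real m2 * Cl)"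
    using RBMO_admissible_coherenceD[OF adm r(1) \<open>R > 0\<close> xr_sub] \<open>A \<ge> 0\<close>
    by (meson add_left_mono mult_left_mono order_trans)
  ultimately have coh: "\<bar>fB c t - fB x r\<bar> \<le> A * (2 + real m1 * Cl + real m2 * Cl)"
    by (simp add: algebra_simps)
  have "(\<integral>z\<in>ball c t. \<bar>f z - fB x r\<bar> \<partial>mu)
      \<le> (\<integral>z\<in>ball c t. \<bar>f z - fB c t\<bar> \<partial>mu) + measure mu (ball c t) * \<bar>fB c t - fB x r\<bar>"
    using li unfolding loc_integrable_def
    by (intro set_integral_abs_diff_const_le upper_doubling_ball_fmeasurable[OF ud]) auto
  also have "\<dots> \<le> A * mR + mR * (A * (2 + real m1 * Cl + real m2 * Cl))"
    using osc coh upper_doubling_measure_mono_ball[OF ud ct_sub]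
    by (intro add_mono mult_mono) (auto simp: mR_def)
  also have "\<dots> = A * (3 + real m1 * Cl + real m2 * Cl) * mR" by (simp add: algebra_simps)
  finally show ?thesis unfolding mR_def .
qed

lemma RBMO_admissible_oscillation_le_cover:
  fixes mu :: "'a::metric_space measure"
  assumes ud: "upper_doubling mu lam" and Cl: "\<And>x r. r > 0 \<Longrightarrow> lam x (2*r) \<le> Cl * lam x r"
    and li: "loc_integrable mu f" and adm: "RBMO_admissible mu lam sg f A fB" and "sg \<ge> 1"
    and "0 < r" "0 < t"
    and C: "finite C" "card C \<le> n" "ball x r \<subseteq> (\<Union>c\<in>C. ball c t)"
    and near: "\<And>c. c \<in> C \<Longrightarrow> dist x c < r + t"
    and inner: "r + t + sg * t \<le> R" and outer: "r + t + 2*R \<le> 2^m1 * t"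
    and "2*R \<le> 2^m2 * r"
  shows "(\<integral>y\<in>ball x r. \<bar>f y - fB x r\<bar> \<partial>mu)
    \<le> n * (A * (3 + real m1 * Cl + real m2 * Cl) * measure mu (ball x R))"
proof -
  let ?bound = "A * (3 + real m1 * Cl + real m2 * Cl) * measure mu (ball x R)"
  have "r \<le> R" using \<open>sg \<ge> 1\<close> \<open>0 < t\<close> inner mult_nonneg_nonneg[of sg t] by linarith
  have small_ball: "(\<integral>z\<in>ball c t. \<bar>f z - fB x r\<bar> \<partial>mu) \<le> ?bound" if "c \<in> C" for c
  proof (rule RBMO_admissible_small_ball_oscillation_le[OF ud, OF Cl li adm \<open>sg \<ge> 1\<close> \<open>0 < r\<close> _ \<open>0 < t\<close>])
    show "ball c (sg * t) \<subseteq> ball x R" "ball x (2*R) \<subseteq> ball c (2^m1 * t)"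
      using near[OF that] inner outer by (auto intro!: ball_subset_ball_dist simp: dist_commute)
  qed (use \<open>r \<le> R\<close> \<open>2*R \<le> 2^m2 * r\<close> in auto)
  have "0 \<le> ?bound"
    using RBMO_admissible_const_nonneg[OF ud adm] upper_doubling_doubling_constant_pos[OF ud, OF Cl]
    by simp
  have "(\<integral>y\<in>ball x r. \<bar>f y - fB x r\<bar> \<partial>mu) \<le> (\<Sum>c\<in>C. (\<integral>z\<in>ball c t. \<bar>f z - fB x r\<bar> \<partial>mu))"
    using C(1,3) by (intro set_integral_le_sum_cover loc_integrable_abs_diff_const[OF ud li]) auto
  also have "\<dots> \<le> card C * ?bound"
    using sum_mono[OF small_ball] by simp
  also have "\<dots> \<le> n * ?bound"
    using C(2) \<open>0 \<le> ?bound\<close> by (intro mult_right_mono) auto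
  finally show ?thesis .
qed

lemma RBMO_admissible_oscillation_dilate:
  fixes mu :: "'a::metric_space measure"
  assumes gd: "geom_doubling TYPE('a)" and ud: "upper_doubling mu lam"
    and "rho > 1" "sg > 1" and li: "loc_integrable mu f" and adm: "RBMO_admissible mu lam sg f A fB"
  obtains A' where "A \<le> A'"
    "\<And>x r. r > 0 \<Longrightarrow> (\<integral>y\<in>ball x r. \<bar>f y - fB x r\<bar> \<partial>mu) \<le> A' * measure mu (ball x (rho * r))"
proof -
  obtain Cl where Cl: "\<And>x r. r > 0 \<Longrightarrow> lam x (2*r) \<le> Cl * lam x r"
    using ud unfolding upper_doubling_def by blast
  obtain N where N: "\<And>k (x::'a) r. r > 0 \<Longrightarrow>
      \<exists>C. finite C \<and> card C \<le> N^k \<and> ball x r \<subseteq> (\<Union>c\<in>C. ball c (r/2^k))"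
    using geom_doubling_iterate[OF gd] by blast
  obtain k :: nat where "(sg + 1) / (rho - 1) < 2^k" using real_arch_pow[of 2] by auto
  then have k: "1 + 1/2^k + sg * (1/2^k) \<le> rho" using \<open>rho > 1\<close> by (simp add: field_simps)
  obtain m1 :: nat where "(2*rho + 1 + 1/2^k) * 2^k < 2^m1" using real_arch_pow[of 2] by auto
  then have m1: "1 + 1/2^k + 2*rho \<le> 2^m1 * (1/2^k)" by (simp add: field_simps)
  obtain m2 :: nat where m2: "2*rho < 2^m2" using real_arch_pow[of 2] by auto
  define A' where "A' = max A (N^k * (A * (3 + real m1 * Cl + real m2 * Cl)))"
  have osc: "(\<integral>y\<in>ball x r. \<bar>f y - fB x r\<bar> \<partial>mu) \<le> A' * measure mu (ball x (rho * r))"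
    if "r > 0" for x r
  proof -
    define t where "t = r * (1/2^k)"
    obtain C where C: "finite C" "card C \<le> N^k" "ball x r \<subseteq> (\<Union>c\<in>C. ball c t)"
      using N[OF \<open>r > 0\<close>, of k x] by (auto simp: t_def)
    let ?C = "{c \<in> C. dist x c < r + t}"
    have "card ?C \<le> N^k" using C(1,2) card_mono[OF C(1), of ?C] by auto
    have "(\<integral>y\<in>ball x r. \<bar>f y - fB x r\<bar> \<partial>mu)
        \<le> N^k * (A * (3 + real m1 * Cl + real m2 * Cl) * measure mu (ball x (rho * r)))"
    proof (rule RBMO_admissible_oscillation_le_cover[OF ud Cl li adm _ \<open>r > 0\<close> _ _
          \<open>card ?C \<le> N^k\<close> ball_cover_restrict_near[OF C(3)]])
      show "r + t + sg * t \<le> rho * r" "r + t + 2 * (rho * r) \<le> 2^m1 * t"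
        using mult_right_mono[OF k, of r] mult_right_mono[OF m1, of r] \<open>r > 0\<close>
        by (simp_all add: t_def algebra_simps)
    qed (use \<open>sg > 1\<close> \<open>r > 0\<close> C(1) m2 in \<open>auto simp: t_def\<close>)
    also have "\<dots> \<le> A' * measure mu (ball x (rho * r))"
      unfolding A'_def by (metis max.cobounded2 measure_nonneg mult_right_mono mult.assoc)
    finally show ?thesis .
  qed
  show thesis by (rule that[OF _ osc]) (simp add: A'_def)
qed

theorem RBMO_subset_RBMO:
  fixes mu :: "'a::metric_space measure"
  assumes "geom_doubling TYPE('a)" "upper_doubling mu lam" "rho > 1" "sg > 1"
  shows "RBMO mu lam sg \<subseteq> RBMO mu lam rho"
proof
  fix f assume "f \<in> RBMO mu lam sg"
  then obtain A fB where li: "loc_integrable mu f" and adm: "RBMO_admissible mu lam sg f A fB"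
    unfolding RBMO_def by blast
  obtain A' where "A \<le> A'" and osc:
    "\<And>x r. r > 0 \<Longrightarrow> (\<integral>y\<in>ball x r. \<bar>f y - fB x r\<bar> \<partial>mu) \<le> A' * measure mu (ball x (rho * r))"
    using RBMO_admissible_oscillation_dilate[OF assms li adm] by blast
  have "RBMO_admissible mu lam sg f A' fB"
    by (rule RBMO_admissible_const_mono[OF assms(2) adm \<open>A \<le> A'\<close>])
  then have "RBMO_admissible mu lam rho f A' fB"
    using osc unfolding RBMO_admissible_def by blast
  then show "f \<in> RBMO mu lam rho" using li unfolding RBMO_def by blast
qed

theorem lemma4p4:
  fixes mu :: "'a::metric_space measure" and lam :: "'a \<Rightarrow> real \<Rightarrow> real"
    and rho sigma :: real
  assumes "geom_doubling TYPE('a)"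
    and "upper_doubling mu lam"
    and "rho > 1" and "sigma > 1"
  shows "RBMO mu lam rho = RBMO mu lam sigma"
  using RBMO_subset_RBMO[OF assms(1,2,4,3)] RBMO_subset_RBMO[OF assms(1,2,3,4)] by (rule antisym)

end
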